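(* Let $0<\nu<1$, $\rho>0$, $k_>\ge0$ and $0\le k_<<n/2$. Let $\bar f$ be either $ff_1$ or $f_0f_1$, and let $K$ be the Hilbert space of $u$ with $\|u;K\|=\|\bar f\widehat u\|_2<\infty$. Then $K$ is an algebra: there is a constant $C$ such that for all $u_1,u_2\in K$, $$\|u_1u_2;K\|\le C\|u_1;K\|\,\|u_2;K\|.$$ One can take $C^2=\int d\eta\,\bar f(\eta)^{-2}\big(1+2^{2k}f_0(\eta)^{2\nu}\big)$ with $k=k_<\vee k_>$, and this integral converges.
   Context: On $\mathbb{R}^n$: $f_0(\xi)=\exp(\rho|\xi|^\nu)$, $f(\xi)=\exp(\rho(|\xi|^\nu\vee1))$, $f_1(\xi)=|\xi|_>^{k_>}+|\xi|_<^{k_<}$, where $|\xi|_>^m=|\xi|^m$ for $|\xi|>1$ and $0$ otherwise, $|\xi|_<^m=|\xi|^m$ for $|\xi|\le1$ and $0$ otherwise. $\widehat u$ denotes the Fourier transform and $\|\cdot\|_2$ the $L^2$ norm. *)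

theory Defs
  imports "HOL-Analysis.Analysis"
begin

text \<open>Weights on R^n (R^n rendered as real^'n). |xi|^m is read as 1 when m = 0
  (also at xi = 0), as is customary.\<close>

definition rpow :: "real \<Rightarrow> real \<Rightarrow> real" where
  "rpow r m = (if m = 0 then 1 else r powr m)"

definition f0 :: "real \<Rightarrow> real \<Rightarrow> real^'n \<Rightarrow> real" where
  "f0 \<rho> \<nu> \<xi> = exp (\<rho> * rpow (norm \<xi>) \<nu>)"

definition ff :: "real \<Rightarrow> real \<Rightarrow> real^'n \<Rightarrow> real" where
  "ff \<rho> \<nu> \<xi> = exp (\<rho> * max (rpow (norm \<xi>) \<nu>) 1)"

definition f1 :: "real \<Rightarrow> real \<Rightarrow> real^'n \<Rightarrow> real" where
  "f1 kg kl \<xi> =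
     (if norm \<xi> > 1 then rpow (norm \<xi>) kg else 0) +
     (if norm \<xi> \<le> 1 then rpow (norm \<xi>) kl else 0)"

text \<open>Inverse Fourier transform, convention  u(x) = \<integral> g(\<xi>) e^{2\<pi> i x\<cdot>\<xi>} d\<xi>,
  i.e. \<^emph>\<open>u\<close>-hat(\<xi>) = \<integral> u(x) e^{-2\<pi> i x\<cdot>\<xi>} dx.\<close>

definition inv_fourier :: "(real^'n \<Rightarrow> complex) \<Rightarrow> real^'n \<Rightarrow> complex" where
  "inv_fourier g x = (LINT \<xi>|lborel. g \<xi> * cis (2 * pi * (x \<bullet> \<xi>)))"

definition wnorm :: "(real^'n \<Rightarrow> real) \<Rightarrow> (real^'n \<Rightarrow> complex) \<Rightarrow> real" where
  "wnorm fb g = sqrt (LINT \<xi>|lborel. (fb \<xi> * cmod (g \<xi>))\<^sup>2)"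

text \<open>u belongs to K with Fourier transform g: g measurable, fbar g in L^2, and u is the
  inverse Fourier transform of g (g is automatically in L^1, so u is a genuine function).\<close>

definition in_K_with :: "(real^'n \<Rightarrow> real) \<Rightarrow> (real^'n \<Rightarrow> complex) \<Rightarrow> (real^'n \<Rightarrow> complex) \<Rightarrow> bool" where
  "in_K_with fb u g \<longleftrightarrow> g \<in> borel_measurable lborel \<and>
      integrable lborel (\<lambda>\<xi>. (fb \<xi> * cmod (g \<xi>))\<^sup>2) \<and>
      (\<forall>x. u x = inv_fourier g x)"

end

theory Submission
  imports Defs
begin

text \<open>
  The Fourier transform of u1 u2 is the convolution g1 * g2. Writing Phi for the weight as a
  function of |xi|, Cauchy-Schwarz in eta bounds (Phi(xi) |(g1 * g2)(xi)|)^2 by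
    int (Phi(xi) / (Phi(eta) Phi(xi - eta)))^2 d eta  *  int (Phi |g1|)^2(eta) (Phi |g2|)^2(xi - eta) d eta,
  so integrating in xi proves the estimate once the first factor is bounded by C^2 uniformly in xi.
  If one of the frequencies eta, xi - eta has non-positive inner product with xi, the other one is
  at least as long as xi and the ratio is at most 1 / Phi of the first. Otherwise, with b the
  shorter and a the longer of the two, Phi(xi) <= 2^k exp(rho nu b^nu) Phi(a): for the exponential
  factor by (a + b)^nu <= a^nu + nu b^nu, for the power factor by doubling. Reflecting eta makes the
  two cases complementary, which gives the kernel Phi^-2 (1 + 2^(2k) f0^(2 nu)). This kernel is
  integrable: near the origin it is O(|eta|^(-2 k<)) with 2 k< below the dimension, and at infinity
  it decays like exp(-2 rho (1 - nu) |eta|^nu). In particular 1 / Phi is square integrable, so every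
  g with Phi g in L^2 is integrable, which justifies the use of Fubini's theorem throughout.
\<close>

section \<open>Convolution and the inverse Fourier transform\<close>

lemma nn_integral_lborel_translate:
  fixes f :: "'a::euclidean_space \<Rightarrow> ennreal"
  assumes [measurable]: "f \<in> borel_measurable borel"
  shows "(\<integral>\<^sup>+x. f (x - t) \<partial>lborel) = (\<integral>\<^sup>+x. f x \<partial>lborel)"
proof -
  have "(\<integral>\<^sup>+x. f x \<partial>lborel) = (\<integral>\<^sup>+x. f x \<partial>distr lborel borel ((+) (-t)))"
    by (simp add: lborel_distr_plus)
  then show ?thesis
    by (simp add: nn_integral_distr)
qed

lemma nn_integral_lborel_reflect_translate:
  fixes f :: "'a::euclidean_space \<Rightarrow> ennreal"
  assumes [measurable]: "f \<in> borel_measurable borel"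
  shows "(\<integral>\<^sup>+x. f (t - x) \<partial>lborel) = (\<integral>\<^sup>+x. f x \<partial>lborel)"
proof -
  have "lborel = density (distr lborel borel (\<lambda>x. t + (-1) *\<^sub>R x)) (\<lambda>_. \<bar>-1::real\<bar> ^ DIM('a))"
    by (rule lborel_affine) simp
  then have "(\<integral>\<^sup>+x. f x \<partial>lborel) = (\<integral>\<^sup>+x. f x \<partial>density (distr lborel borel (\<lambda>x. t + (-1) *\<^sub>R x)) (\<lambda>_. 1))"
    by simp
  then show ?thesis
    by (simp add: nn_integral_density nn_integral_distr)
qed

lemma integral_lborel_translate:
  fixes f :: "'a::euclidean_space \<Rightarrow> 'b::{banach, second_countable_topology}"
  assumes [measurable]: "f \<in> borel_measurable borel"
  shows "(LINT x|lborel. f (x - t)) = (LINT x|lborel. f x)"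
proof -
  have "(LINT x|lborel. f x) = (LINT x|distr lborel borel ((+) (-t)). f x)"
    by (simp add: lborel_distr_plus)
  then show ?thesis
    by (simp add: integral_distr)
qed

definition convolution :: "('a::euclidean_space \<Rightarrow> complex) \<Rightarrow> ('a \<Rightarrow> complex) \<Rightarrow> 'a \<Rightarrow> complex" where
  "convolution g1 g2 \<xi> = (LINT \<eta>|lborel. g1 \<eta> * g2 (\<xi> - \<eta>))"

lemma borel_measurable_convolution [measurable]:
  assumes [measurable]: "g1 \<in> borel_measurable borel" "g2 \<in> borel_measurable borel"
  shows "convolution g1 g2 \<in> borel_measurable borel"
  unfolding convolution_def[abs_def] by measurable

lemma norm_convolution_le_nn_integral:
  "ennreal (norm (convolution g1 g2 \<xi>)) \<le> (\<integral>\<^sup>+\<eta>. ennreal (norm (g1 \<eta>) * norm (g2 (\<xi> - \<eta>))) \<partial>lborel)"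
proof (cases "integrable lborel (\<lambda>\<eta>. g1 \<eta> * g2 (\<xi> - \<eta>))")
  case True
  then show ?thesis
    using integral_norm_bound_ennreal[OF True] by (simp add: convolution_def norm_mult)
qed (simp add: convolution_def not_integrable_integral_eq)

lemma integrable_convolution_integrand:
  fixes g1 g2 h :: "'a::euclidean_space \<Rightarrow> complex"
  assumes integrable: "integrable lborel g1" "integrable lborel g2"
    and [measurable]: "h \<in> borel_measurable borel" and unimodular: "\<And>\<xi>. norm (h \<xi>) = 1"
  shows "integrable (lborel \<Otimes>\<^sub>M lborel) (\<lambda>(\<eta>, \<xi>). g1 \<eta> * g2 (\<xi> - \<eta>) * h \<xi>)"
proof (rule integrableI_bounded)
  have [measurable]: "g1 \<in> borel_measurable borel" "g2 \<in> borel_measurable borel"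
    using integrable by (auto dest: borel_measurable_integrable)
  show "(\<lambda>(\<eta>, \<xi>). g1 \<eta> * g2 (\<xi> - \<eta>) * h \<xi>) \<in> borel_measurable (lborel \<Otimes>\<^sub>M lborel)"
    by measurable
  have "(\<integral>\<^sup>+p. ennreal (norm (case p of (\<eta>, \<xi>) \<Rightarrow> g1 \<eta> * g2 (\<xi> - \<eta>) * h \<xi>)) \<partial>(lborel \<Otimes>\<^sub>M lborel))
      = (\<integral>\<^sup>+\<eta>. \<integral>\<^sup>+\<xi>. ennreal (norm (g1 \<eta>)) * ennreal (norm (g2 (\<xi> - \<eta>))) \<partial>lborel \<partial>lborel)"
    by (subst lborel.nn_integral_fst[symmetric]) (auto simp: norm_mult unimodular ennreal_mult)
  also have "\<dots> = (\<integral>\<^sup>+\<eta>. ennreal (norm (g1 \<eta>)) * (\<integral>\<^sup>+\<xi>. ennreal (norm (g2 \<xi>)) \<partial>lborel) \<partial>lborel)"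
    by (simp add: nn_integral_cmult nn_integral_lborel_translate[of "\<lambda>\<xi>. ennreal (norm (g2 \<xi>))"])
  also have "\<dots> < \<infinity>"
    using integrable by (simp add: nn_integral_multc integrable_iff_bounded ennreal_mult_less_top)
  finally show "(\<integral>\<^sup>+p. ennreal (norm (case p of (\<eta>, \<xi>) \<Rightarrow> g1 \<eta> * g2 (\<xi> - \<eta>) * h \<xi>)) \<partial>(lborel \<Otimes>\<^sub>M lborel))
      < \<infinity>" .
qed

lemma inv_fourier_convolution:
  fixes g1 g2 :: "real^'n \<Rightarrow> complex"
  assumes integrable: "integrable lborel g1" "integrable lborel g2"
  shows "inv_fourier (convolution g1 g2) x = inv_fourier g1 x * inv_fourier g2 x"
proof -
  have [measurable]: "g2 \<in> borel_measurable borel"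
    using integrable by (auto dest: borel_measurable_integrable)
  define e where "e \<xi> = cis (2 * pi * (x \<bullet> \<xi>))" for \<xi> :: "real^'n"
  have [measurable]: "e \<in> borel_measurable borel"
    unfolding e_def by (intro borel_measurable_continuous_onI continuous_intros)
  define F where "F \<eta> \<xi> = g1 \<eta> * g2 (\<xi> - \<eta>) * e \<xi>" for \<eta> \<xi>
  have "norm (e \<xi>) = 1" for \<xi>
    by (simp add: e_def)
  then have "integrable (lborel \<Otimes>\<^sub>M lborel) (case_prod F)"
    unfolding F_def by (intro integrable_convolution_integrand integrable) auto
  then have Fubini: "(LINT \<xi>|lborel. LINT \<eta>|lborel. F \<eta> \<xi>) = (LINT \<eta>|lborel. LINT \<xi>|lborel. F \<eta> \<xi>)"
    by (rule lborel_pair.Fubini_integral)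
  have "inv_fourier g1 x * inv_fourier g2 x = (LINT \<eta>|lborel. g1 \<eta> * e \<eta> * (LINT \<zeta>|lborel. g2 \<zeta> * e \<zeta>))"
    by (simp add: inv_fourier_def e_def)
  also have "\<dots> = (LINT \<eta>|lborel. LINT \<xi>|lborel. F \<eta> \<xi>)"
  proof (rule Bochner_Integration.integral_cong[OF refl])
    fix \<eta>
    have "(LINT \<zeta>|lborel. g2 \<zeta> * e \<zeta>) = (LINT \<xi>|lborel. g2 (\<xi> - \<eta>) * e (\<xi> - \<eta>))"
      by (rule integral_lborel_translate[symmetric]) measurable
    then have "g1 \<eta> * e \<eta> * (LINT \<zeta>|lborel. g2 \<zeta> * e \<zeta>)
        = (LINT \<xi>|lborel. g1 \<eta> * g2 (\<xi> - \<eta>) * (e \<eta> * e (\<xi> - \<eta>)))"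
      by (simp add: ac_simps)
    moreover have "e \<eta> * e (\<xi> - \<eta>) = e \<xi>" for \<xi>
      by (simp add: e_def cis_mult inner_diff_right algebra_simps)
    ultimately show "g1 \<eta> * e \<eta> * (LINT \<zeta>|lborel. g2 \<zeta> * e \<zeta>) = (LINT \<xi>|lborel. F \<eta> \<xi>)"
      by (simp add: F_def)
  qed
  also have "\<dots> = inv_fourier (convolution g1 g2) x"
    unfolding Fubini[symmetric] by (simp add: F_def inv_fourier_def convolution_def e_def)
  finally show ?thesis ..
qed

section \<open>Moderate radial weights\<close>

lemma norm_le_norm_diff_if_inner_nonpos:
  fixes x y :: "'a::real_inner"
  assumes "y \<bullet> x \<le> 0"
  shows "norm x \<le> norm (x - y)"
proof -
  have "(norm x)\<^sup>2 \<le> (norm (x - y))\<^sup>2"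
    using assms inner_ge_zero[of y] by (simp add: power2_norm_eq_inner inner_diff inner_commute del: inner_ge_zero)
  then show ?thesis
    by (rule power2_le_imp_le) simp
qed

lemma divide_mult_le_divide:
  fixes x y z m :: real
  assumes "0 \<le> x" "x \<le> m * y" "0 \<le> y" "0 \<le> z" "0 \<le> m"
  shows "x / (y * z) \<le> m / z"
proof (cases "y = 0")
  case False
  then have "x / (y * z) \<le> m * y / (y * z)"
    using assms by (intro divide_right_mono) auto
  then show ?thesis
    using False by simp
qed (use assms in simp)

definition weight_ratio :: "(real \<Rightarrow> real) \<Rightarrow> 'a::real_normed_vector \<Rightarrow> 'a \<Rightarrow> real" where
  "weight_ratio \<Phi> \<xi> \<eta> = \<Phi> (norm \<xi>) / (\<Phi> (norm \<eta>) * \<Phi> (norm (\<xi> - \<eta>)))"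

definition weight_kernel :: "(real \<Rightarrow> real) \<Rightarrow> (real \<Rightarrow> real) \<Rightarrow> real \<Rightarrow> real" where
  "weight_kernel \<Phi> M r = inverse ((\<Phi> r)\<^sup>2) * (1 + (M r)\<^sup>2)"

lemma weight_kernel_le:
  assumes "0 < L" "L \<le> \<Phi> r" "1 + (M r)\<^sup>2 \<le> U"
  shows "weight_kernel \<Phi> M r \<le> U / L\<^sup>2"
proof -
  have "inverse ((\<Phi> r)\<^sup>2) \<le> inverse (L\<^sup>2)"
    using assms by (intro le_imp_inverse_le power_mono) auto
  then have "inverse ((\<Phi> r)\<^sup>2) * (1 + (M r)\<^sup>2) \<le> inverse (L\<^sup>2) * U"
    using assms by (intro mult_mono) auto
  then show ?thesis
    by (simp add: weight_kernel_def divide_inverse mult.commute)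
qed

locale radial_weight =
  fixes \<Phi> M :: "real \<Rightarrow> real"
  assumes borel_measurable_weight [measurable]: "\<Phi> \<in> borel_measurable borel"
    and borel_measurable_moderator [measurable]: "M \<in> borel_measurable borel"
    and weight_nonneg: "0 \<le> \<Phi> r"
    and weight_pos: "0 < r \<Longrightarrow> 0 < \<Phi> r"
    and weight_mono: "0 \<le> r \<Longrightarrow> r \<le> s \<Longrightarrow> \<Phi> r \<le> \<Phi> s"
    and weight_moderate: "0 \<le> b \<Longrightarrow> b \<le> a \<Longrightarrow> 0 \<le> r \<Longrightarrow> r \<le> a + b \<Longrightarrow> \<Phi> r \<le> M b * \<Phi> a"
begin

lemma moderator_ge_one: "0 \<le> b \<Longrightarrow> 1 \<le> M b"
  using weight_moderate[of b "b + 1" "b + 1"] weight_pos[of "b + 1"] by simp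

lemma weight_ratio_nonneg: "0 \<le> weight_ratio \<Phi> \<xi> \<eta>"
  by (simp add: weight_ratio_def weight_nonneg)

lemma weight_ratio_swap: "weight_ratio \<Phi> \<xi> (\<xi> - \<eta>) = weight_ratio \<Phi> \<xi> \<eta>"
  by (simp add: weight_ratio_def mult.commute)

lemma weight_ratio_sq_le:
  assumes "\<Phi> (norm \<xi>) \<le> m * \<Phi> (norm (\<xi> - \<eta>))" "0 \<le> m"
  shows "(weight_ratio \<Phi> \<xi> \<eta>)\<^sup>2 \<le> inverse ((\<Phi> (norm \<eta>))\<^sup>2) * m\<^sup>2"
proof -
  have "weight_ratio \<Phi> \<xi> \<eta> \<le> m / \<Phi> (norm \<eta>)"
    unfolding weight_ratio_def mult.commute[of "\<Phi> (norm \<eta>)"]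
    using assms by (intro divide_mult_le_divide) (auto simp: weight_nonneg)
  then have "(weight_ratio \<Phi> \<xi> \<eta>)\<^sup>2 \<le> (m / \<Phi> (norm \<eta>))\<^sup>2"
    by (intro power_mono weight_ratio_nonneg)
  then show ?thesis
    by (simp add: power_divide field_simps)
qed

lemma weight_ratio_sq_le_inverse:
  assumes "norm \<xi> \<le> norm (\<xi> - \<eta>)"
  shows "(weight_ratio \<Phi> \<xi> \<eta>)\<^sup>2 \<le> inverse ((\<Phi> (norm \<eta>))\<^sup>2)"
  using weight_ratio_sq_le[of \<xi> 1 \<eta>] assms weight_mono by simp

lemma weight_ratio_sq_le_moderate:
  assumes "norm \<eta> \<le> norm (\<xi> - \<eta>)"
  shows "(weight_ratio \<Phi> \<xi> \<eta>)\<^sup>2 \<le> inverse ((\<Phi> (norm \<eta>))\<^sup>2) * (M (norm \<eta>))\<^sup>2"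
proof (rule weight_ratio_sq_le)
  have "norm \<xi> \<le> norm (\<xi> - \<eta>) + norm \<eta>"
    using norm_triangle_ineq[of "\<xi> - \<eta>" \<eta>] by simp
  then show "\<Phi> (norm \<xi>) \<le> M (norm \<eta>) * \<Phi> (norm (\<xi> - \<eta>))"
    using assms by (intro weight_moderate) auto
  show "0 \<le> M (norm \<eta>)"
    using moderator_ge_one[of "norm \<eta>"] by simp
qed

text \<open>
  The two bounds differ only in strict versus non-strict inequalities, chosen so that after the
  reflection \<open>\<eta> \<mapsto> -\<eta>\<close> their case distinctions become complementary.
\<close>

definition near_bound :: "'a::real_inner \<Rightarrow> 'a \<Rightarrow> real" where
  "near_bound \<xi> y =
    (if y \<bullet> \<xi> < 0 then inverse ((\<Phi> (norm y))\<^sup>2)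
     else if norm y < norm (\<xi> - y) then inverse ((\<Phi> (norm y))\<^sup>2) * (M (norm y))\<^sup>2 else 0)"

definition far_bound :: "'a::real_inner \<Rightarrow> 'a \<Rightarrow> real" where
  "far_bound \<xi> y =
    (if y \<bullet> \<xi> \<le> 0 then inverse ((\<Phi> (norm y))\<^sup>2)
     else if norm y \<le> norm (\<xi> - y) then inverse ((\<Phi> (norm y))\<^sup>2) * (M (norm y))\<^sup>2 else 0)"

lemma near_bound_nonneg: "0 \<le> near_bound \<xi> y"
  by (simp add: near_bound_def)

lemma far_bound_nonneg: "0 \<le> far_bound \<xi> y"
  by (simp add: far_bound_def)

lemma weight_ratio_sq_le_near_far: "(weight_ratio \<Phi> \<xi> \<eta>)\<^sup>2 \<le> near_bound \<xi> \<eta> + far_bound \<xi> (\<xi> - \<eta>)"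
proof -
  have "(weight_ratio \<Phi> \<xi> \<eta>)\<^sup>2 \<le> near_bound \<xi> \<eta> \<or> (weight_ratio \<Phi> \<xi> (\<xi> - \<eta>))\<^sup>2 \<le> far_bound \<xi> (\<xi> - \<eta>)"
  proof (cases "\<eta> \<bullet> \<xi> < 0 \<or> (\<xi> - \<eta>) \<bullet> \<xi> \<le> 0")
    case True
    then show ?thesis
      using weight_ratio_sq_le_inverse[of \<xi> \<eta>] weight_ratio_sq_le_inverse[of \<xi> "\<xi> - \<eta>"]
        norm_le_norm_diff_if_inner_nonpos[of \<eta> \<xi>] norm_le_norm_diff_if_inner_nonpos[of "\<xi> - \<eta>" \<xi>]
      by (auto simp: near_bound_def far_bound_def)
  next
    case False
    then show ?thesis
      using weight_ratio_sq_le_moderate[of \<eta> \<xi>] weight_ratio_sq_le_moderate[of "\<xi> - \<eta>" \<xi>]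
      by (auto simp: near_bound_def far_bound_def)
  qed
  then show ?thesis
    using near_bound_nonneg[of \<xi> \<eta>] far_bound_nonneg[of \<xi> "\<xi> - \<eta>"] by (auto simp: weight_ratio_swap)
qed

lemma near_far_bound_le_weight_kernel: "near_bound \<xi> (- x) + far_bound \<xi> x \<le> weight_kernel \<Phi> M (norm x)"
  by (auto simp: near_bound_def far_bound_def weight_kernel_def algebra_simps)

lemma nn_integral_weight_ratio_sq_le:
  fixes \<xi> :: "'a::euclidean_space"
  shows "(\<integral>\<^sup>+\<eta>. ennreal ((weight_ratio \<Phi> \<xi> \<eta>)\<^sup>2) \<partial>lborel)
    \<le> (\<integral>\<^sup>+x. ennreal (weight_kernel \<Phi> M (norm (x::'a))) \<partial>lborel)"
proof -
  have [measurable]: "near_bound \<xi> \<in> borel_measurable borel" "far_bound \<xi> \<in> borel_measurable borel"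
    unfolding near_bound_def[abs_def] far_bound_def[abs_def] by measurable
  have "(\<integral>\<^sup>+\<eta>. ennreal ((weight_ratio \<Phi> \<xi> \<eta>)\<^sup>2) \<partial>lborel)
      \<le> (\<integral>\<^sup>+\<eta>. ennreal (near_bound \<xi> \<eta>) + ennreal (far_bound \<xi> (\<xi> - \<eta>)) \<partial>lborel)"
    by (rule nn_integral_mono)
      (simp add: weight_ratio_sq_le_near_far near_bound_nonneg far_bound_nonneg ennreal_leI
        ennreal_plus[symmetric] del: ennreal_plus)
  also have "\<dots> = (\<integral>\<^sup>+\<eta>. ennreal (near_bound \<xi> \<eta>) \<partial>lborel) + (\<integral>\<^sup>+\<eta>. ennreal (far_bound \<xi> (\<xi> - \<eta>)) \<partial>lborel)"
    by (rule nn_integral_add) auto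
  also have "\<dots> = (\<integral>\<^sup>+x. ennreal (near_bound \<xi> (- x)) \<partial>lborel) + (\<integral>\<^sup>+x. ennreal (far_bound \<xi> x) \<partial>lborel)"
    using nn_integral_lborel_reflect_translate[of "\<lambda>y. ennreal (near_bound \<xi> y)" 0]
      nn_integral_lborel_reflect_translate[of "\<lambda>y. ennreal (far_bound \<xi> y)" \<xi>]
    by simp
  also have "\<dots> = (\<integral>\<^sup>+x. ennreal (near_bound \<xi> (- x)) + ennreal (far_bound \<xi> x) \<partial>lborel)"
    by (rule nn_integral_add[symmetric]) auto
  also have "\<dots> \<le> (\<integral>\<^sup>+x. ennreal (weight_kernel \<Phi> M (norm (x::'a))) \<partial>lborel)"
    by (rule nn_integral_mono)
      (simp add: near_far_bound_le_weight_kernel near_bound_nonneg far_bound_nonneg ennreal_leI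
        ennreal_plus[symmetric] del: ennreal_plus)
  finally show ?thesis .
qed

lemma convolution_weighted_sq_le:
  fixes g1 g2 :: "'a::euclidean_space \<Rightarrow> complex" and \<xi> :: 'a
  assumes [measurable]: "g1 \<in> borel_measurable borel" "g2 \<in> borel_measurable borel"
  defines "F \<equiv> \<lambda>\<eta>. \<Phi> (norm \<eta>) * cmod (g1 \<eta>) * (\<Phi> (norm (\<xi> - \<eta>)) * cmod (g2 (\<xi> - \<eta>)))"
  shows "ennreal ((\<Phi> (norm \<xi>) * cmod (convolution g1 g2 \<xi>))\<^sup>2)
    \<le> (\<integral>\<^sup>+x. ennreal (weight_kernel \<Phi> M (norm (x::'a))) \<partial>lborel) * (\<integral>\<^sup>+\<eta>. ennreal ((F \<eta>)\<^sup>2) \<partial>lborel)"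
proof -
  have F_nonneg: "0 \<le> F \<eta>" for \<eta>
    by (simp add: F_def weight_nonneg)
  from norm_convolution_le_nn_integral[of g1 g2 \<xi>]
  have "ennreal (\<Phi> (norm \<xi>) * cmod (convolution g1 g2 \<xi>))
      \<le> (\<integral>\<^sup>+\<eta>. ennreal (\<Phi> (norm \<xi>) * (cmod (g1 \<eta>) * cmod (g2 (\<xi> - \<eta>)))) \<partial>lborel)"
    using weight_nonneg
    by (simp add: ennreal_mult nn_integral_cmult mult_left_mono)
  also have "\<dots> = (\<integral>\<^sup>+\<eta>. ennreal (weight_ratio \<Phi> \<xi> \<eta>) * ennreal (F \<eta>) \<partial>lborel)"
  proof (rule nn_integral_cong_AE)
    show "AE \<eta> in lborel. ennreal (\<Phi> (norm \<xi>) * (cmod (g1 \<eta>) * cmod (g2 (\<xi> - \<eta>))))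
        = ennreal (weight_ratio \<Phi> \<xi> \<eta>) * ennreal (F \<eta>)"
      using AE_lborel_singleton[of 0] AE_lborel_singleton[of \<xi>]
    proof eventually_elim
      case (elim \<eta>)
      then have "0 < \<Phi> (norm \<eta>)" "0 < \<Phi> (norm (\<xi> - \<eta>))"
        by (auto intro: weight_pos)
      then show ?case
        by (simp add: ennreal_mult[symmetric] weight_ratio_nonneg F_nonneg)
           (simp add: weight_ratio_def F_def field_simps)
    qed
  qed
  finally have "(ennreal (\<Phi> (norm \<xi>) * cmod (convolution g1 g2 \<xi>)))\<^sup>2
      \<le> (\<integral>\<^sup>+\<eta>. ennreal (weight_ratio \<Phi> \<xi> \<eta>) * ennreal (F \<eta>) \<partial>lborel)\<^sup>2"
    by (rule power_mono) simp
  also have "\<dots> \<le> (\<integral>\<^sup>+\<eta>. (ennreal (weight_ratio \<Phi> \<xi> \<eta>))\<^sup>2 \<partial>lborel) * (\<integral>\<^sup>+\<eta>. (ennreal (F \<eta>))\<^sup>2 \<partial>lborel)"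
    unfolding F_def weight_ratio_def by (rule Cauchy_Schwarz_nn_integral) measurable
  also have "\<dots> = (\<integral>\<^sup>+\<eta>. ennreal ((weight_ratio \<Phi> \<xi> \<eta>)\<^sup>2) \<partial>lborel) * (\<integral>\<^sup>+\<eta>. ennreal ((F \<eta>)\<^sup>2) \<partial>lborel)"
    by (simp add: ennreal_power weight_ratio_nonneg F_nonneg)
  also have "\<dots> \<le> (\<integral>\<^sup>+x. ennreal (weight_kernel \<Phi> M (norm (x::'a))) \<partial>lborel) * (\<integral>\<^sup>+\<eta>. ennreal ((F \<eta>)\<^sup>2) \<partial>lborel)"
    using nn_integral_weight_ratio_sq_le[of \<xi>] by (rule mult_right_mono) simp
  finally show ?thesis
    using weight_nonneg by (simp add: ennreal_power)
qed

lemma nn_integral_convolution_weighted_sq_le: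
  fixes g1 g2 :: "'a::euclidean_space \<Rightarrow> complex"
  assumes [measurable]: "g1 \<in> borel_measurable borel" "g2 \<in> borel_measurable borel"
  defines "N \<equiv> \<lambda>g. \<integral>\<^sup>+x. ennreal ((\<Phi> (norm x) * cmod (g x))\<^sup>2) \<partial>(lborel :: 'a measure)"
  shows "N (convolution g1 g2)
    \<le> (\<integral>\<^sup>+x. ennreal (weight_kernel \<Phi> M (norm (x::'a))) \<partial>lborel) * N g1 * N g2"
proof -
  define K where "K = (\<integral>\<^sup>+x. ennreal (weight_kernel \<Phi> M (norm (x::'a))) \<partial>lborel)"
  define F1 where "F1 x = \<Phi> (norm x) * cmod (g1 x)" for x :: 'a
  define F2 where "F2 x = \<Phi> (norm x) * cmod (g2 x)" for x :: 'a
  have [measurable]: "F1 \<in> borel_measurable borel" "F2 \<in> borel_measurable borel"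
    unfolding F1_def F2_def by measurable
  have "N (convolution g1 g2) \<le> (\<integral>\<^sup>+\<xi>. K * (\<integral>\<^sup>+\<eta>. ennreal ((F1 \<eta> * F2 (\<xi> - \<eta>))\<^sup>2) \<partial>lborel) \<partial>lborel)"
    unfolding N_def K_def F1_def F2_def
    by (intro nn_integral_mono convolution_weighted_sq_le) measurable
  also have "\<dots> = K * (\<integral>\<^sup>+\<xi>. \<integral>\<^sup>+\<eta>. ennreal ((F1 \<eta> * F2 (\<xi> - \<eta>))\<^sup>2) \<partial>lborel \<partial>lborel)"
    by (rule nn_integral_cmult) measurable
  also have "(\<integral>\<^sup>+\<xi>. \<integral>\<^sup>+\<eta>. ennreal ((F1 \<eta> * F2 (\<xi> - \<eta>))\<^sup>2) \<partial>lborel \<partial>lborel)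
      = (\<integral>\<^sup>+\<eta>. \<integral>\<^sup>+\<xi>. ennreal ((F1 \<eta> * F2 (\<xi> - \<eta>))\<^sup>2) \<partial>lborel \<partial>lborel)"
    by (rule lborel_pair.Fubini') measurable
  also have "\<dots> = (\<integral>\<^sup>+\<eta>. ennreal ((F1 \<eta>)\<^sup>2) * N g2 \<partial>lborel)"
  proof (rule nn_integral_cong)
    fix \<eta> :: 'a
    have "(\<integral>\<^sup>+\<xi>. ennreal ((F1 \<eta> * F2 (\<xi> - \<eta>))\<^sup>2) \<partial>lborel)
        = ennreal ((F1 \<eta>)\<^sup>2) * (\<integral>\<^sup>+\<xi>. ennreal ((F2 (\<xi> - \<eta>))\<^sup>2) \<partial>lborel)"
      by (simp add: power_mult_distrib ennreal_mult nn_integral_cmult)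
    also have "\<dots> = ennreal ((F1 \<eta>)\<^sup>2) * N g2"
      using nn_integral_lborel_translate[of "\<lambda>x. ennreal ((F2 x)\<^sup>2)" \<eta>]
      by (simp add: N_def F2_def)
    finally show "(\<integral>\<^sup>+\<xi>. ennreal ((F1 \<eta> * F2 (\<xi> - \<eta>))\<^sup>2) \<partial>lborel) = ennreal ((F1 \<eta>)\<^sup>2) * N g2" .
  qed
  also have "\<dots> = N g1 * N g2"
    by (simp add: nn_integral_multc N_def F1_def)
  finally show ?thesis
    by (simp add: K_def mult.assoc)
qed

lemma integrable_of_weighted_sq:
  fixes g :: "'a::euclidean_space \<Rightarrow> complex"
  assumes [measurable]: "g \<in> borel_measurable borel"
    and kernel: "integrable lborel (\<lambda>x::'a. weight_kernel \<Phi> M (norm x))"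
    and weighted: "integrable lborel (\<lambda>x. (\<Phi> (norm x) * cmod (g x))\<^sup>2)"
  shows "integrable lborel g"
proof -
  have "(\<integral>\<^sup>+x. ennreal (inverse ((\<Phi> (norm (x::'a)))\<^sup>2)) \<partial>lborel) \<le> (\<integral>\<^sup>+x. ennreal (weight_kernel \<Phi> M (norm (x::'a))) \<partial>lborel)"
    by (intro nn_integral_mono ennreal_leI) (simp add: weight_kernel_def mult_le_cancel_left1)
  also have "\<dots> < \<infinity>"
    using kernel by (simp add: integrable_iff_bounded weight_kernel_def)
  finally have inverse_finite: "(\<integral>\<^sup>+x. (ennreal (inverse (\<Phi> (norm (x::'a)))))\<^sup>2 \<partial>lborel) < \<infinity>"
    by (simp add: ennreal_power power_inverse weight_nonneg)
  have weighted_finite: "(\<integral>\<^sup>+x. (ennreal (\<Phi> (norm x) * cmod (g x)))\<^sup>2 \<partial>lborel) < \<infinity>"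
    using weighted by (simp add: integrable_iff_bounded ennreal_power weight_nonneg)
  have factor: "(\<integral>\<^sup>+x. ennreal (norm (g x)) \<partial>lborel)
      = (\<integral>\<^sup>+x. ennreal (inverse (\<Phi> (norm x))) * ennreal (\<Phi> (norm x) * cmod (g x)) \<partial>lborel)"
  proof (rule nn_integral_cong_AE)
    show "AE x in lborel. ennreal (norm (g x)) = ennreal (inverse (\<Phi> (norm x))) * ennreal (\<Phi> (norm x) * cmod (g x))"
      using AE_lborel_singleton[of 0]
    proof eventually_elim
      case (elim x)
      then have "0 < \<Phi> (norm x)"
        by (simp add: weight_pos)
      then show ?case
        by (simp add: ennreal_mult[symmetric])
    qed
  qed
  have "(\<integral>\<^sup>+x. ennreal (norm (g x)) \<partial>lborel)\<^sup>2
      \<le> (\<integral>\<^sup>+x. (ennreal (inverse (\<Phi> (norm (x::'a)))))\<^sup>2 \<partial>lborel) * (\<integral>\<^sup>+x. (ennreal (\<Phi> (norm x) * cmod (g x)))\<^sup>2 \<partial>lborel)"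
    unfolding factor by (rule Cauchy_Schwarz_nn_integral) measurable
  also have "\<dots> < \<infinity>"
    using inverse_finite weighted_finite by (simp add: ennreal_mult_less_top)
  finally show ?thesis
    by (simp add: integrable_iff_bounded power_less_top_ennreal)
qed

lemma integrable_convolution_weighted_sq:
  fixes g1 g2 :: "'a::euclidean_space \<Rightarrow> complex"
  assumes [measurable]: "g1 \<in> borel_measurable borel" "g2 \<in> borel_measurable borel"
    and kernel: "integrable lborel (\<lambda>x::'a. weight_kernel \<Phi> M (norm x))"
    and weighted: "integrable lborel (\<lambda>x. (\<Phi> (norm x) * cmod (g1 x))\<^sup>2)"
      "integrable lborel (\<lambda>x. (\<Phi> (norm x) * cmod (g2 x))\<^sup>2)"
  shows "integrable lborel (\<lambda>\<xi>. (\<Phi> (norm \<xi>) * cmod (convolution g1 g2 \<xi>))\<^sup>2)"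
    and "(LINT \<xi>|lborel. (\<Phi> (norm \<xi>) * cmod (convolution g1 g2 \<xi>))\<^sup>2)
      \<le> (LINT x|lborel. weight_kernel \<Phi> M (norm (x::'a)))
        * (LINT x|lborel. (\<Phi> (norm x) * cmod (g1 x))\<^sup>2) * (LINT x|lborel. (\<Phi> (norm x) * cmod (g2 x))\<^sup>2)"
    (is "?I \<le> ?K * ?L1 * ?L2")
proof -
  have kernel_nonneg: "0 \<le> weight_kernel \<Phi> M r" for r
    by (simp add: weight_kernel_def)
  have nonneg: "0 \<le> ?K" "0 \<le> ?L1" "0 \<le> ?L2"
    by (simp_all add: kernel_nonneg)
  have "(\<integral>\<^sup>+\<xi>. ennreal ((\<Phi> (norm \<xi>) * cmod (convolution g1 g2 \<xi>))\<^sup>2) \<partial>lborel)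
      \<le> ennreal ?K * ennreal ?L1 * ennreal ?L2"
    using nn_integral_convolution_weighted_sq_le[of g1 g2] kernel weighted
    by (simp add: nn_integral_eq_integral kernel_nonneg)
  also have "\<dots> = ennreal (?K * ?L1 * ?L2)"
    using nonneg by (simp add: ennreal_mult)
  finally have bound: "(\<integral>\<^sup>+\<xi>. ennreal ((\<Phi> (norm \<xi>) * cmod (convolution g1 g2 \<xi>))\<^sup>2) \<partial>lborel)
      \<le> ennreal (?K * ?L1 * ?L2)" .
  then show integrable: "integrable lborel (\<lambda>\<xi>. (\<Phi> (norm \<xi>) * cmod (convolution g1 g2 \<xi>))\<^sup>2)"
    by (intro integrableI_nonneg) (auto simp: top.not_eq_extremum intro: le_less_trans)
  show "?I \<le> ?K * ?L1 * ?L2"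
    using bound nonneg by (simp add: nn_integral_eq_integral[OF integrable])
qed

lemma in_K_with_mult:
  fixes u1 u2 g1 g2 :: "real^'n \<Rightarrow> complex"
  defines "fb \<equiv> \<lambda>\<xi>. \<Phi> (norm \<xi>)"
  assumes kernel: "integrable lborel (\<lambda>x::real^'n. weight_kernel \<Phi> M (norm x))"
    and K: "in_K_with fb u1 g1" "in_K_with fb u2 g2"
  shows "in_K_with fb (\<lambda>x. u1 x * u2 x) (convolution g1 g2)"
    and "wnorm fb (convolution g1 g2)
      \<le> sqrt (LINT x|lborel. weight_kernel \<Phi> M (norm (x::real^'n))) * wnorm fb g1 * wnorm fb g2"
proof -
  have [measurable]: "g1 \<in> borel_measurable borel" "g2 \<in> borel_measurable borel"
    and weighted: "integrable lborel (\<lambda>x. (\<Phi> (norm x) * cmod (g1 x))\<^sup>2)"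
      "integrable lborel (\<lambda>x. (\<Phi> (norm x) * cmod (g2 x))\<^sup>2)"
    using K by (auto simp: in_K_with_def fb_def)
  have "u1 x * u2 x = inv_fourier (convolution g1 g2) x" for x
    using K kernel weighted
    by (simp add: in_K_with_def inv_fourier_convolution integrable_of_weighted_sq)
  then show "in_K_with fb (\<lambda>x. u1 x * u2 x) (convolution g1 g2)"
    using integrable_convolution_weighted_sq(1)[OF _ _ kernel weighted]
    by (simp add: in_K_with_def fb_def)
  show "wnorm fb (convolution g1 g2)
      \<le> sqrt (LINT x|lborel. weight_kernel \<Phi> M (norm (x::real^'n))) * wnorm fb g1 * wnorm fb g2"
    using integrable_convolution_weighted_sq(2)[OF _ _ kernel weighted]
    by (simp add: wnorm_def fb_def real_sqrt_mult[symmetric])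
qed

end

section \<open>Integrability of radial kernels\<close>

text \<open>
  A radial function bounded by \<open>radial_profile p |x| ^ n\<close> is bounded by the product of the
  one-dimensional \<open>coord_kernel p (x \<bullet> b)\<close>, because \<open>0 < |x \<bullet> b| \<le> |x|\<close>, and Tonelli factorises
  the integral of the product. The value \<open>\<infinity>\<close> on the coordinate hyperplanes, a null set, keeps
  the domination valid there, where \<open>powr\<close> would return the junk value \<open>0\<close>.
\<close>

definition radial_profile :: "real \<Rightarrow> real \<Rightarrow> real" where
  "radial_profile p r = (if r \<le> 1 then r powr (-p) else r powr (-2))"

definition coord_kernel :: "real \<Rightarrow> real \<Rightarrow> ennreal" where
  "coord_kernel p t = (if t = 0 then \<infinity> else ennreal (radial_profile p \<bar>t\<bar>))"

lemma borel_measurable_coord_kernel [measurable]: "coord_kernel p \<in> borel_measurable borel"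
  unfolding coord_kernel_def[abs_def] radial_profile_def by measurable

lemma nn_integral_coord_kernel_finite:
  assumes "0 \<le> p" "p < 1"
  shows "(\<integral>\<^sup>+t. coord_kernel p t \<partial>lborel) < \<infinity>"
proof -
  define q where "q t = (if t \<in> {0..1} then t powr (-p) else 0) + (if t \<in> {1..} then t powr (-2) else 0)"
    for t :: real
  have [measurable]: "q \<in> borel_measurable borel"
    unfolding q_def[abs_def] by measurable
  have q_nonneg: "0 \<le> q t" for t
    by (simp add: q_def)
  have "((\<lambda>t. t powr (-p)) has_integral (1 / (1 - p))) {0..1}"
    using has_integral_powr_from_0[of "-p" 1] assms by simp
  moreover have "((\<lambda>t. t powr (-2)) has_integral 1) {1::real..}"
    using has_integral_powr_to_inf[of "-2" 1] by simp
  ultimately have "(q has_integral (1 / (1 - p) + 1)) UNIV"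
    unfolding q_def[abs_def] by (intro has_integral_add has_integral_restrict_UNIV[THEN iffD2])
  then have q_finite: "(\<integral>\<^sup>+t. ennreal (q t) \<partial>lborel) < \<infinity>"
    by (simp add: nn_integral_has_integral_lborel q_nonneg)
  have "(\<integral>\<^sup>+t. coord_kernel p t \<partial>lborel) \<le> (\<integral>\<^sup>+t. ennreal (q t) + ennreal (q (- t)) \<partial>lborel)"
  proof (rule nn_integral_mono_AE)
    show "AE t in lborel. coord_kernel p t \<le> ennreal (q t) + ennreal (q (- t))"
      using AE_lborel_singleton[of 0]
      by eventually_elim (auto simp: coord_kernel_def radial_profile_def q_def ennreal_plus[symmetric] abs_real_def
          simp del: ennreal_plus intro!: ennreal_leI)
  qed
  also have "\<dots> = (\<integral>\<^sup>+t. ennreal (q t) \<partial>lborel) + (\<integral>\<^sup>+t. ennreal (q t) \<partial>lborel)"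
    using nn_integral_lborel_reflect_translate[of "\<lambda>t. ennreal (q t)" 0]
    by (simp add: nn_integral_add)
  also have "\<dots> < \<infinity>"
    using q_finite by (simp add: less_top[symmetric] ennreal_add_eq_top)
  finally show ?thesis .
qed

lemma radial_profile_le_coord_kernel:
  assumes "0 \<le> p" "0 < \<bar>t\<bar>" "\<bar>t\<bar> \<le> r"
  shows "ennreal (radial_profile p r) \<le> coord_kernel p t"
proof -
  have "r powr (-p) \<le> \<bar>t\<bar> powr (-p)" "r powr (-2) \<le> \<bar>t\<bar> powr (-2)"
    using assms by (auto intro: powr_mono2')
  moreover have "r powr (-2) \<le> \<bar>t\<bar> powr (-p)" if "1 < r" "\<bar>t\<bar> \<le> 1"
  proof -
    have "r powr (-2) \<le> 1 powr (-2)" "1 powr (-p) \<le> \<bar>t\<bar> powr (-p)"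
      using that assms by (intro powr_mono2'; simp)+
    then show ?thesis by simp
  qed
  ultimately show ?thesis
    using assms by (auto simp: coord_kernel_def radial_profile_def intro!: ennreal_leI)
qed

lemma radial_profile_power_le_prod_coord_kernel:
  fixes x :: "'a::euclidean_space"
  assumes "0 \<le> p"
  shows "ennreal (radial_profile p (norm x) ^ DIM('a)) \<le> (\<Prod>b\<in>Basis. coord_kernel p (x \<bullet> b))"
proof (cases "\<exists>b\<in>Basis. x \<bullet> b = 0")
  case True
  then have "(\<Prod>b\<in>Basis. coord_kernel p (x \<bullet> b)) = \<infinity>"
    by (auto simp: ennreal_prod_eq_top coord_kernel_def radial_profile_def)
  then show ?thesis by simp
next
  case False
  have "ennreal (radial_profile p (norm x) ^ DIM('a)) = (\<Prod>b\<in>(Basis::'a set). ennreal (radial_profile p (norm x)))"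
    by (simp add: ennreal_power radial_profile_def)
  also have "\<dots> \<le> (\<Prod>b\<in>Basis. coord_kernel p (x \<bullet> b))"
    by (rule prod_mono_ennreal) (use False assms Basis_le_norm in \<open>auto intro!: radial_profile_le_coord_kernel\<close>)
  finally show ?thesis .
qed

lemma nn_integral_radial_finite:
  fixes w :: "real \<Rightarrow> real" and q :: real
  assumes "0 \<le> q" "q < DIM('a::euclidean_space)" "0 < A"
    and small: "\<And>r. 0 < r \<Longrightarrow> r \<le> 1 \<Longrightarrow> w r \<le> A * r powr (-q)"
    and large: "\<And>r. 1 < r \<Longrightarrow> w r \<le> A * r powr (- 2 * real DIM('a))"
  shows "(\<integral>\<^sup>+x. ennreal (w (norm x)) \<partial>(lborel :: 'a measure)) < \<infinity>"
proof -
  define p where "p = q / DIM('a)"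
  have p: "0 \<le> p" "p < 1"
    using assms by (auto simp: p_def)
  have "(\<integral>\<^sup>+x. ennreal (w (norm x)) \<partial>(lborel :: 'a measure))
      \<le> (\<integral>\<^sup>+x. ennreal A * (\<Prod>b\<in>Basis. coord_kernel p ((x::'a) \<bullet> b)) \<partial>lborel)"
  proof (rule nn_integral_mono_AE)
    show "AE x in lborel. ennreal (w (norm x)) \<le> ennreal A * (\<Prod>b\<in>Basis. coord_kernel p ((x::'a) \<bullet> b))"
      using AE_lborel_singleton[of 0]
    proof eventually_elim
      case (elim x)
      then have "w (norm x) \<le> A * radial_profile p (norm x) ^ DIM('a)"
        using small[of "norm x"] large[of "norm x"]
        by (auto simp: p_def radial_profile_def powr_power mult.commute)
      then have "ennreal (w (norm x)) \<le> ennreal A * ennreal (radial_profile p (norm x) ^ DIM('a))"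
        using \<open>0 < A\<close> by (simp add: ennreal_mult[symmetric] ennreal_leI radial_profile_def)
      also have "\<dots> \<le> ennreal A * (\<Prod>b\<in>Basis. coord_kernel p (x \<bullet> b))"
        using radial_profile_power_le_prod_coord_kernel[OF p(1), of x] by (rule mult_left_mono) simp
      finally show ?case .
    qed
  qed
  also have "\<dots> = ennreal A * (\<integral>\<^sup>+t. coord_kernel p t \<partial>lborel) ^ DIM('a)"
    by (simp add: nn_integral_cmult) (subst nn_integral_lborel_prod; simp)
  also have "\<dots> < \<infinity>"
    using nn_integral_coord_kernel_finite[OF p]
    by (simp add: ennreal_mult_less_top power_less_top_ennreal)
  finally show ?thesis .
qed

lemma exp_neg_powr_le_powr:
  fixes \<beta> \<nu> q :: real
  assumes "0 < \<beta>" "0 < \<nu>"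
  obtains B where "0 < B" "\<And>r. 1 < r \<Longrightarrow> exp (- \<beta> * r powr \<nu>) \<le> B * r powr (- q)"
proof
  define m :: nat where "m = nat \<lceil>q / \<nu>\<rceil> + 1"
  have "q / \<nu> \<le> m"
    unfolding m_def by linarith
  then have q_le: "q \<le> \<nu> * m"
    using assms by (simp add: divide_le_eq mult.commute)
  show "0 < (m / \<beta>) ^ m"
    using assms by (simp add: m_def)
  show "exp (- \<beta> * r powr \<nu>) \<le> (m / \<beta>) ^ m * r powr (- q)" if "1 < r" for r
  proof -
    have "(\<beta> / m) ^ m * r powr q \<le> (\<beta> / m) ^ m * r powr (\<nu> * m)"
      using that q_le assms by (intro mult_left_mono powr_mono) auto
    also have "r powr (\<nu> * m) = (r powr \<nu>) ^ m"
      using that by (subst powr_power) (auto simp: mult.commute)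
    also have "(\<beta> / m) ^ m * (r powr \<nu>) ^ m = (\<beta> * r powr \<nu> / m) ^ m"
      by (simp add: power_divide power_mult_distrib)
    also have "\<dots> \<le> (1 + \<beta> * r powr \<nu> / m) ^ m"
      using assms by (intro power_mono) auto
    also have "\<dots> \<le> exp (\<beta> * r powr \<nu>)"
    proof (rule exp_ge_one_plus_x_over_n_power_n)
      show "- real m \<le> \<beta> * r powr \<nu>"
        using assms by (simp add: order_trans[of _ 0])
    qed (simp add: m_def)
    finally have "(\<beta> / m) ^ m * r powr q \<le> exp (\<beta> * r powr \<nu>)" .
    then show ?thesis
      using that assms
      by (simp add: exp_minus powr_minus field_simps power_divide m_def del: of_nat_Suc)
  qed
qed

section \<open>The weights of the theorem\<close>

lemma powr_add_le_concave:
  fixes a b \<nu> :: real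
  assumes "0 < \<nu>" "\<nu> < 1" "0 \<le> b" "b \<le> a"
  shows "(a + b) powr \<nu> \<le> a powr \<nu> + \<nu> * b powr \<nu>"
proof (cases "b = 0")
  case False
  then have a: "0 < a" and b: "0 < b" using assms by auto
  have bernoulli: "(1 + b / a) powr \<nu> \<le> 1 + \<nu> * (b / a)"
    using Youngs_inequality_0[of \<nu> "1 - \<nu>" "1 + b / a" 1] assms a b by (simp add: algebra_simps add_pos_pos)
  have "a powr \<nu> * (b / a) = b powr \<nu> * (b / a) powr (1 - \<nu>)"
    using a b by (simp add: powr_diff powr_divide field_simps)
  also have "\<dots> \<le> b powr \<nu>"
    using a b assms by (intro mult_left_le powr_le1) auto
  finally have ratio: "a powr \<nu> * (b / a) \<le> b powr \<nu>" .
  have "a + b = a * (1 + b / a)"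
    using a by (simp add: field_simps)
  then have "(a + b) powr \<nu> = a powr \<nu> * (1 + b / a) powr \<nu>"
    using a b by (simp add: powr_mult)
  also have "\<dots> \<le> a powr \<nu> * (1 + \<nu> * (b / a))"
    using bernoulli by (rule mult_left_mono) simp
  also have "\<dots> \<le> a powr \<nu> + \<nu> * b powr \<nu>"
    using mult_left_mono[OF ratio, of \<nu>] assms by (simp add: algebra_simps)
  finally show ?thesis .
qed simp

definition exp_profile :: "real \<Rightarrow> real \<Rightarrow> real \<Rightarrow> real \<Rightarrow> real" where
  "exp_profile \<rho> \<nu> c r = exp (\<rho> * max (r powr \<nu>) c)"

definition power_profile :: "real \<Rightarrow> real \<Rightarrow> real \<Rightarrow> real" where
  "power_profile kg kl r = (if r \<le> 1 then rpow r kl else rpow r kg)"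

lemma f0_eq_exp_profile: "\<nu> \<noteq> 0 \<Longrightarrow> f0 \<rho> \<nu> \<xi> = exp_profile \<rho> \<nu> 0 (norm \<xi>)"
  by (simp add: f0_def exp_profile_def rpow_def)

lemma ff_eq_exp_profile: "\<nu> \<noteq> 0 \<Longrightarrow> ff \<rho> \<nu> \<xi> = exp_profile \<rho> \<nu> 1 (norm \<xi>)"
  by (simp add: ff_def exp_profile_def rpow_def)

lemma f1_eq_power_profile: "f1 kg kl \<xi> = power_profile kg kl (norm \<xi>)"
  by (simp add: f1_def power_profile_def)

lemma exp_le_exp_profile: "0 \<le> \<rho> \<Longrightarrow> exp (\<rho> * r powr \<nu>) \<le> exp_profile \<rho> \<nu> c r"
  by (simp add: exp_profile_def mult_left_mono)

lemma exp_profile_mono: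
  assumes "0 \<le> \<rho>" "0 < \<nu>" "0 \<le> r" "r \<le> s"
  shows "exp_profile \<rho> \<nu> c r \<le> exp_profile \<rho> \<nu> c s"
proof -
  have "max (r powr \<nu>) c \<le> max (s powr \<nu>) c"
    using assms by (intro max.mono powr_mono2) auto
  then show ?thesis
    using assms by (simp add: exp_profile_def mult_left_mono)
qed

lemma exp_profile_moderate:
  assumes "0 < \<nu>" "\<nu> < 1" "0 \<le> \<rho>" "0 \<le> b" "b \<le> a" "0 \<le> r" "r \<le> a + b"
  shows "exp_profile \<rho> \<nu> c r \<le> exp (\<rho> * \<nu> * b powr \<nu>) * exp_profile \<rho> \<nu> c a"
proof -
  have "r powr \<nu> \<le> (a + b) powr \<nu>"
    using assms by (intro powr_mono2) auto
  also have "\<dots> \<le> a powr \<nu> + \<nu> * b powr \<nu>"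
    using assms by (intro powr_add_le_concave) auto
  moreover have "0 \<le> \<nu> * b powr \<nu>"
    using assms by simp
  ultimately have "max (r powr \<nu>) c \<le> \<nu> * b powr \<nu> + max (a powr \<nu>) c"
    by (auto simp: max_def)
  then have "\<rho> * max (r powr \<nu>) c \<le> \<rho> * (\<nu> * b powr \<nu> + max (a powr \<nu>) c)"
    using assms by (intro mult_left_mono) auto
  then show ?thesis
    by (simp add: exp_profile_def exp_add[symmetric] algebra_simps)
qed

lemma rpow_pos: "0 < r \<Longrightarrow> rpow r m = r powr m"
  by (simp add: rpow_def)

lemma rpow_mono: "0 \<le> r \<Longrightarrow> r \<le> s \<Longrightarrow> 0 \<le> m \<Longrightarrow> rpow r m \<le> rpow s m"
  by (auto simp: rpow_def intro: powr_mono2)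

lemma power_profile_nonneg: "0 \<le> power_profile kg kl r"
  by (simp add: power_profile_def rpow_def)

lemma power_profile_pos: "0 < r \<Longrightarrow> 0 < power_profile kg kl r"
  by (simp add: power_profile_def rpow_def)

lemma power_profile_mono:
  assumes "0 \<le> kg" "0 \<le> kl" "0 \<le> r" "r \<le> s"
  shows "power_profile kg kl r \<le> power_profile kg kl s"
proof -
  have "rpow r kl \<le> 1" if "r \<le> 1"
    using that assms by (auto simp: rpow_def intro: powr_le1)
  moreover have "1 \<le> rpow s kg" if "1 < s"
    using that assms by (auto simp: rpow_def ge_one_powr_ge_zero)
  ultimately show ?thesis
    using assms rpow_mono[of r s kl] rpow_mono[of r s kg] by (auto simp: power_profile_def)
qed

lemma power_profile_pos_eq: "0 < r \<Longrightarrow> power_profile kg kl r = r powr (if r \<le> 1 then kl else kg)"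
  by (simp add: power_profile_def rpow_pos)

lemma powr_scale_le:
  fixes t a m k :: real
  assumes "1 \<le> t" "0 < a" "m \<le> k"
  shows "(t * a) powr m \<le> t powr k * a powr m"
proof -
  have "t powr m \<le> t powr k"
    using assms by (intro powr_mono) auto
  then show ?thesis
    using assms by (simp add: powr_mult mult_right_mono)
qed

lemma power_profile_scale:
  assumes "0 \<le> kg" "0 \<le> kl" "1 \<le> t" "0 \<le> a"
  shows "power_profile kg kl (t * a) \<le> t powr max kl kg * power_profile kg kl a"
proof (cases "a = 0")
  case True
  then show ?thesis
    using assms ge_one_powr_ge_zero[of t "max kl kg"] power_profile_nonneg[of kg kl 0]
    by (simp add: mult_le_cancel_right1)
next
  case False
  then have a: "0 < a" "a \<le> t * a" using assms by (auto simp: mult_le_cancel_right1)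
  have scale: "(t * a) powr m \<le> t powr max kl kg * a powr m" if "m \<le> max kl kg" for m
    using powr_scale_le[OF assms(3) a(1) that] .
  have "(t * a) powr (if t * a \<le> 1 then kl else kg) \<le> t powr max kl kg * a powr (if a \<le> 1 then kl else kg)"
  proof -
    consider "t * a \<le> 1" | "1 < a" | "a \<le> 1" "1 < t * a" "kg \<le> kl" | "a \<le> 1" "1 < t * a" "kl < kg"
      by linarith
    then show ?thesis
    proof cases
      case 1
      then have "a \<le> 1" using a by linarith
      then show ?thesis using 1 scale[of kl] by simp
    next
      case 2
      then have "1 < t * a" using a by linarith
      then show ?thesis using 2 scale[of kg] by simp
    next
      case 3
      have "(t * a) powr kg \<le> (t * a) powr kl" using 3 by (intro powr_mono) auto
      from order_trans[OF this scale[of kl]] show ?thesis using 3 by simp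
    next
      case 4
      have "a powr kg \<le> a powr kl" using 4 a by (intro powr_mono') auto
      then have "t powr max kl kg * a powr kg \<le> t powr max kl kg * a powr kl"
        by (rule mult_left_mono) simp
      with scale[of kg] have "(t * a) powr kg \<le> t powr max kl kg * a powr kl"
        by simp
      then show ?thesis using 4 by simp
    qed
  qed
  moreover have "0 < t * a" using a by linarith
  ultimately show ?thesis using a by (simp only: power_profile_pos_eq)
qed

definition weight_profile :: "real \<Rightarrow> real \<Rightarrow> real \<Rightarrow> real \<Rightarrow> real \<Rightarrow> real \<Rightarrow> real" where
  "weight_profile \<rho> \<nu> c kg kl r = exp_profile \<rho> \<nu> c r * power_profile kg kl r"

definition exp_moderator :: "real \<Rightarrow> real \<Rightarrow> real \<Rightarrow> real \<Rightarrow> real \<Rightarrow> real" where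
  "exp_moderator \<rho> \<nu> kg kl b = 2 powr max kl kg * exp (\<rho> * \<nu> * b powr \<nu>)"

lemma radial_weight_profile:
  assumes "0 < \<nu>" "\<nu> < 1" "0 \<le> \<rho>" "0 \<le> kg" "0 \<le> kl"
  shows "radial_weight (weight_profile \<rho> \<nu> c kg kl) (exp_moderator \<rho> \<nu> kg kl)"
proof
  show "weight_profile \<rho> \<nu> c kg kl \<in> borel_measurable borel" "exp_moderator \<rho> \<nu> kg kl \<in> borel_measurable borel"
    unfolding weight_profile_def[abs_def] exp_moderator_def[abs_def] exp_profile_def power_profile_def rpow_def
    by measurable
  show "0 \<le> weight_profile \<rho> \<nu> c kg kl r" for r
    by (simp add: weight_profile_def exp_profile_def power_profile_nonneg)
  show "0 < weight_profile \<rho> \<nu> c kg kl r" if "0 < r" for r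
    using that by (simp add: weight_profile_def exp_profile_def power_profile_pos)
  show "weight_profile \<rho> \<nu> c kg kl r \<le> weight_profile \<rho> \<nu> c kg kl s" if "0 \<le> r" "r \<le> s" for r s
    unfolding weight_profile_def using assms that
    by (intro mult_mono exp_profile_mono power_profile_mono) (auto simp: exp_profile_def power_profile_nonneg)
  show "weight_profile \<rho> \<nu> c kg kl r \<le> exp_moderator \<rho> \<nu> kg kl b * weight_profile \<rho> \<nu> c kg kl a"
    if "0 \<le> b" "b \<le> a" "0 \<le> r" "r \<le> a + b" for a b r
  proof -
    have "power_profile kg kl r \<le> power_profile kg kl (2 * a)"
      using that assms by (intro power_profile_mono) auto
    also have "\<dots> \<le> 2 powr max kl kg * power_profile kg kl a"
      using that assms by (intro power_profile_scale) auto
    finally have power: "power_profile kg kl r \<le> 2 powr max kl kg * power_profile kg kl a" .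
    have "exp_profile \<rho> \<nu> c r \<le> exp (\<rho> * \<nu> * b powr \<nu>) * exp_profile \<rho> \<nu> c a"
      using that assms by (intro exp_profile_moderate) auto
    from mult_mono[OF this power]
    show ?thesis
      by (simp add: weight_profile_def exp_moderator_def power_profile_nonneg exp_profile_def ac_simps)
  qed
qed

lemma weight_kernel_profile_le_near_zero:
  fixes \<rho> \<nu> c kg kl r :: real
  assumes "0 < \<nu>" "0 \<le> \<rho>" "0 < r" "r \<le> 1"
  defines "M \<equiv> exp_moderator \<rho> \<nu> kg kl"
  shows "weight_kernel (weight_profile \<rho> \<nu> c kg kl) M r \<le> (1 + (M 1)\<^sup>2) * r powr (- (2 * kl))"
proof -
  have "r powr kl \<le> weight_profile \<rho> \<nu> c kg kl r"
    using assms exp_le_exp_profile[of \<rho> r \<nu> c]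
    by (simp add: weight_profile_def power_profile_pos_eq order_trans[OF _ exp_le_exp_profile])
  moreover have "r powr \<nu> \<le> 1"
    using assms by (intro powr_le1) auto
  then have "M r \<le> M 1"
    using mult_left_le[of "r powr \<nu>" "\<rho> * \<nu>"] assms by (simp add: M_def exp_moderator_def)
  then have "(M r)\<^sup>2 \<le> (M 1)\<^sup>2"
    by (intro power_mono) (simp_all add: M_def exp_moderator_def)
  ultimately have "weight_kernel (weight_profile \<rho> \<nu> c kg kl) M r \<le> (1 + (M 1)\<^sup>2) / (r powr kl)\<^sup>2"
    using assms by (intro weight_kernel_le) auto
  then show ?thesis
    using assms by (simp add: powr_minus divide_inverse powr_power)
qed

lemma weight_kernel_profile_le_exp_decay:
  fixes \<rho> \<nu> c kg kl r :: real
  assumes "0 \<le> \<rho>" "0 \<le> \<nu>" "0 \<le> kg" "1 < r"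
  defines "K \<equiv> (2::real) powr max kl kg"
  shows "weight_kernel (weight_profile \<rho> \<nu> c kg kl) (exp_moderator \<rho> \<nu> kg kl) r
    \<le> (1 + K\<^sup>2) * exp (- (2 * \<rho> * (1 - \<nu>)) * r powr \<nu>)"
proof -
  have "1 \<le> power_profile kg kl r"
    using assms by (simp add: power_profile_pos_eq ge_one_powr_ge_zero)
  then have "exp_profile \<rho> \<nu> c r * 1 \<le> weight_profile \<rho> \<nu> c kg kl r"
    unfolding weight_profile_def by (intro mult_left_mono) (simp_all add: exp_profile_def)
  then have lower: "exp (\<rho> * r powr \<nu>) \<le> weight_profile \<rho> \<nu> c kg kl r"
    using exp_le_exp_profile[OF assms(1), of r \<nu> c] by simp
  have "(exp_moderator \<rho> \<nu> kg kl r)\<^sup>2 = K\<^sup>2 * exp (2 * \<rho> * \<nu> * r powr \<nu>)"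
    by (simp add: exp_moderator_def K_def power_mult_distrib power2_eq_square exp_add[symmetric] algebra_simps)
  moreover have "1 \<le> exp (2 * \<rho> * \<nu> * r powr \<nu>)"
    using assms by simp
  ultimately have upper: "1 + (exp_moderator \<rho> \<nu> kg kl r)\<^sup>2 \<le> (1 + K\<^sup>2) * exp (2 * \<rho> * \<nu> * r powr \<nu>)"
    by (simp add: algebra_simps)
  have "(exp (\<rho> * r powr \<nu>))\<^sup>2 = exp (2 * \<rho> * r powr \<nu>)"
    by (simp add: power2_eq_square exp_add[symmetric])
  then have "exp (2 * \<rho> * \<nu> * r powr \<nu>) / (exp (\<rho> * r powr \<nu>))\<^sup>2
      = exp (2 * \<rho> * \<nu> * r powr \<nu> - 2 * \<rho> * r powr \<nu>)"
    by (simp add: exp_diff)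
  also have "2 * \<rho> * \<nu> * r powr \<nu> - 2 * \<rho> * r powr \<nu> = - (2 * \<rho> * (1 - \<nu>)) * r powr \<nu>"
    by (simp add: algebra_simps)
  finally have decay: "exp (2 * \<rho> * \<nu> * r powr \<nu>) / (exp (\<rho> * r powr \<nu>))\<^sup>2
      = exp (- (2 * \<rho> * (1 - \<nu>)) * r powr \<nu>)" .
  have "weight_kernel (weight_profile \<rho> \<nu> c kg kl) (exp_moderator \<rho> \<nu> kg kl) r
      \<le> (1 + K\<^sup>2) * exp (2 * \<rho> * \<nu> * r powr \<nu>) / (exp (\<rho> * r powr \<nu>))\<^sup>2"
    by (rule weight_kernel_le) (use lower upper in auto)
  also have "\<dots> = (1 + K\<^sup>2) * exp (- (2 * \<rho> * (1 - \<nu>)) * r powr \<nu>)"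
    by (simp only: times_divide_eq_right[symmetric] decay)
  finally show ?thesis .
qed

lemma integrable_weight_kernel_profile:
  fixes \<rho> \<nu> c kg kl :: real
  assumes "0 < \<nu>" "\<nu> < 1" "0 < \<rho>" "0 \<le> kg" "0 \<le> kl" "2 * kl < DIM('a::euclidean_space)"
  defines "\<Phi> \<equiv> weight_profile \<rho> \<nu> c kg kl" and "M \<equiv> exp_moderator \<rho> \<nu> kg kl"
  shows "integrable lborel (\<lambda>x::'a. weight_kernel \<Phi> M (norm x))"
proof -
  interpret radial_weight \<Phi> M
    unfolding \<Phi>_def M_def using assms by (intro radial_weight_profile) auto
  define K where "K = (2::real) powr max kl kg"
  obtain B where B: "0 < B"
    "\<And>r. 1 < r \<Longrightarrow> exp (- (2 * \<rho> * (1 - \<nu>)) * r powr \<nu>) \<le> B * r powr (- 2 * real DIM('a))"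
    using assms exp_neg_powr_le_powr[of "2 * \<rho> * (1 - \<nu>)" \<nu> "2 * DIM('a)"] by auto
  define A where "A = max (1 + (M 1)\<^sup>2) ((1 + K\<^sup>2) * B)"
  have "(\<integral>\<^sup>+x. ennreal (weight_kernel \<Phi> M (norm x)) \<partial>(lborel :: 'a measure)) < \<infinity>"
  proof (rule nn_integral_radial_finite)
    show "0 < A"
      unfolding A_def by (rule less_le_trans[OF _ max.cobounded1]) (simp add: add_pos_nonneg)
    show "weight_kernel \<Phi> M r \<le> A * r powr - (2 * kl)" if "0 < r" "r \<le> 1" for r
      using weight_kernel_profile_le_near_zero[of \<nu> \<rho> r c kg kl] assms that
      by (auto simp: A_def \<Phi>_def M_def intro: order_trans mult_right_mono)
    show "weight_kernel \<Phi> M r \<le> A * r powr (- 2 * real DIM('a))" if "1 < r" for r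
    proof -
      have "weight_kernel \<Phi> M r \<le> (1 + K\<^sup>2) * exp (- (2 * \<rho> * (1 - \<nu>)) * r powr \<nu>)"
        using weight_kernel_profile_le_exp_decay[of \<rho> \<nu> kg r c kl] assms that
        by (simp add: \<Phi>_def M_def K_def)
      also have "\<dots> \<le> (1 + K\<^sup>2) * B * r powr (- 2 * real DIM('a))"
        using mult_left_mono[OF B(2)[OF that], of "1 + K\<^sup>2"] by (simp add: mult.assoc)
      also have "\<dots> \<le> A * r powr (- 2 * real DIM('a))"
        by (intro mult_right_mono) (simp_all add: A_def)
      finally show ?thesis .
    qed
  qed (use assms in auto)
  then show ?thesis
    by (intro integrableI_nonneg) (auto simp: weight_kernel_def)
qed

lemma weight_kernel_profile_eq:
  assumes "0 \<le> r"
  shows "weight_kernel (weight_profile \<rho> \<nu> c kg kl) (exp_moderator \<rho> \<nu> kg kl) r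
    = inverse ((weight_profile \<rho> \<nu> c kg kl r)\<^sup>2) * (1 + 2 powr (2 * max kl kg) * exp_profile \<rho> \<nu> 0 r powr (2 * \<nu>))"
proof -
  have "(exp_moderator \<rho> \<nu> kg kl r)\<^sup>2 = 2 powr (2 * max kl kg) * exp_profile \<rho> \<nu> 0 r powr (2 * \<nu>)"
    using assms
    by (simp add: exp_moderator_def exp_profile_def power_mult_distrib powr_def power2_eq_square
        exp_add[symmetric] algebra_simps)
  then show ?thesis
    by (simp add: weight_kernel_def)
qed

theorem lemmaB1:
  fixes \<rho> \<nu> kg kl :: real and fb :: "real^'n \<Rightarrow> real"
  assumes "0 < \<nu>" "\<nu> < 1" "0 < \<rho>" "0 \<le> kg" "0 \<le> kl" "kl < real CARD('n) / 2"
    and "fb = (\<lambda>\<xi>. ff \<rho> \<nu> \<xi> * f1 kg kl \<xi>) \<or> fb = (\<lambda>\<xi>. f0 \<rho> \<nu> \<xi> * f1 kg kl \<xi>)"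
  defines "C \<equiv> sqrt (LINT \<eta>|lborel. inverse ((fb \<eta>)\<^sup>2) *
                 (1 + 2 powr (2 * max kl kg) * (f0 \<rho> \<nu> \<eta>) powr (2 * \<nu>)))"
  shows "integrable lborel (\<lambda>\<eta>. inverse ((fb \<eta>)\<^sup>2) *
                 (1 + 2 powr (2 * max kl kg) * (f0 \<rho> \<nu> \<eta>) powr (2 * \<nu>)))
    \<and> (\<forall>u1 u2 g1 g2. in_K_with fb u1 g1 \<longrightarrow> in_K_with fb u2 g2 \<longrightarrow>
         (\<exists>g. in_K_with fb (\<lambda>x. u1 x * u2 x) g \<and>
              wnorm fb g \<le> C * wnorm fb g1 * wnorm fb g2))"
proof -
  obtain c where fb: "fb = (\<lambda>\<xi>. weight_profile \<rho> \<nu> c kg kl (norm \<xi>))"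
    using assms(1,7)
    by (auto simp: ff_eq_exp_profile f0_eq_exp_profile f1_eq_power_profile weight_profile_def)
  interpret radial_weight "weight_profile \<rho> \<nu> c kg kl" "exp_moderator \<rho> \<nu> kg kl"
    using assms by (intro radial_weight_profile) auto
  have kernel: "inverse ((fb \<eta>)\<^sup>2) * (1 + 2 powr (2 * max kl kg) * (f0 \<rho> \<nu> \<eta>) powr (2 * \<nu>))
      = weight_kernel (weight_profile \<rho> \<nu> c kg kl) (exp_moderator \<rho> \<nu> kg kl) (norm \<eta>)" for \<eta>
    using assms(1) by (simp add: fb weight_kernel_profile_eq f0_eq_exp_profile)
  have integrable: "integrable lborel (\<lambda>x::real^'n. weight_kernel (weight_profile \<rho> \<nu> c kg kl) (exp_moderator \<rho> \<nu> kg kl) (norm x))"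
    using assms by (intro integrable_weight_kernel_profile) auto
  show ?thesis
    unfolding C_def kernel unfolding fb using integrable in_K_with_mult[OF integrable] by blast
qed

end
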